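(* Let $\mathbb{K}$ be a field, let $P_1, P_2 \in \mathbb{K}[X]$ be irreducible, and let $f : \mathbb{K}[X]/(P_1) \to \mathbb{K}[X]/(P_2)$ be a ring isomorphism stabilizing $\mathbb{K}$. Then $S_f$ is coprime to $P_2$ if and only if $Q_f' \neq 0$.
   Context: A ring homomorphism $f : A \to B$ between $\mathbb{K}$-algebras stabilizes $\mathbb{K}$ if there is a field automorphism $\sigma_f$ of $\mathbb{K}$ with $f(a) = \sigma_f(a)$ for all $a \in \mathbb{K}$. For a field automorphism $\sigma$ of $\mathbb{K}$, $\sigma^X$ is the ring automorphism of $\mathbb{K}[X]$ applying $\sigma$ to coefficients; $A\circ Q$ denotes $A(Q(X))$; $'$ denotes the formal derivative. For a ring isomorphism $f : \mathbb{K}[X]/(P_1) \to \mathbb{K}[X]/(P_2)$ stabilizing $\mathbb{K}$: $Q_f$ is the unique polynomial of degree $< \deg P_2$ such that $f$ sends the class of $X$ to the class of $Q_f$, and $S_f \in \mathbb{K}[X]$ is the polynomial with $\sigma_f^X(P_1)\circ Q_f = S_f P_2$ (it exists because $\sigma_f^X(P_1)\circ Q_f$ is divisible by $P_2$). *)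

theory Defs
  imports "HOL-Computational_Algebra.Polynomial" "HOL-Computational_Algebra.Polynomial_Factorial"
begin

text \<open>The quotient ring K[X]/(P) is modelled by its canonical representatives:
  the polynomials r with r mod P = r (i.e. degree < degree P), with addition
  inherited from K[X] and multiplication followed by reduction mod P.\<close>

definition residues :: "'a::field poly \<Rightarrow> 'a poly set" where
  "residues P = {q. q mod P = q}"

definition field_automorphism :: "('a::field \<Rightarrow> 'a) \<Rightarrow> bool" where
  "field_automorphism \<sigma> \<longleftrightarrow> bij \<sigma> \<and> (\<forall>x y. \<sigma> (x + y) = \<sigma> x + \<sigma> y)
     \<and> (\<forall>x y. \<sigma> (x * y) = \<sigma> x * \<sigma> y) \<and> \<sigma> 1 = 1"

definition quot_ring_iso :: "'a::field poly \<Rightarrow> 'a poly \<Rightarrow> ('a poly \<Rightarrow> 'a poly) \<Rightarrow> bool" where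
  "quot_ring_iso P1 P2 f \<longleftrightarrow>
     bij_betw f (residues P1) (residues P2) \<and>
     (\<forall>a\<in>residues P1. \<forall>b\<in>residues P1.
        f (a + b) = f a + f b \<and> f ((a * b) mod P1) = (f a * f b) mod P2) \<and>
     f (1 mod P1) = 1 mod P2"

definition stabilizes_with :: "'a::field poly \<Rightarrow> 'a poly \<Rightarrow> ('a poly \<Rightarrow> 'a poly) \<Rightarrow> ('a \<Rightarrow> 'a) \<Rightarrow> bool" where
  "stabilizes_with P1 P2 f \<sigma> \<longleftrightarrow> field_automorphism \<sigma> \<and>
     (\<forall>c. f ([:c:] mod P1) = [:\<sigma> c:] mod P2)"

definition Qf :: "'a::field poly \<Rightarrow> 'a poly \<Rightarrow> ('a poly \<Rightarrow> 'a poly) \<Rightarrow> 'a poly" where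
  "Qf P1 P2 f = f ([:0, 1:] mod P1)"

text \<open>S_f: the polynomial with sigma^X(P1) o Q_f = S_f * P2.\<close>
definition Sf :: "'a::field poly \<Rightarrow> 'a poly \<Rightarrow> ('a poly \<Rightarrow> 'a poly) \<Rightarrow> ('a \<Rightarrow> 'a) \<Rightarrow> 'a poly" where
  "Sf P1 P2 f \<sigma> = pcompose (map_poly \<sigma> P1) (Qf P1 P2 f) div P2"

end

theory Submission
  imports Defs
begin

text \<open>Write T for \<sigma>^X(P1) and X for the variable. The map A \<mapsto> \<sigma>^X(A) \<circ> Q induces f, so
  T \<circ> Q = S P2, and injectivity of f says that A \<circ> Q \<equiv> B \<circ> Q (mod P2) implies T | A - B.
  Surjectivity gives R with R \<circ> Q = X + P2 H; then T | P2 \<circ> R and Q \<circ> R \<equiv> X (mod T).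
  If P2 | S, expanding P2 \<circ> (R \<circ> Q) and Q \<circ> (R \<circ> Q) to first order around X modulo P2^2
  shows first P2 \<not>| H and then P2 | Q' H, hence P2 | Q'. Conversely, if P2 | Q', differentiating
  T \<circ> Q = S P2 gives P2 | S P2', and P2' \<noteq> 0 since otherwise differentiating R \<circ> Q = X + P2 H
  would make Q' a unit modulo P2. Finally S is coprime to the prime P2 iff P2 \<not>| S, and P2 | Q'
  iff Q' = 0 because deg Q < deg P2.\<close>

lemma square_dvd_pcompose_X_plus:
  fixes p Z :: "'a::idom poly"
  shows "Z^2 dvd pcompose p ([:0, 1:] + Z) - p - pderiv p * Z"
proof (induction p)
  case 0
  show ?case by simp
next
  case (pCons a p)
  then obtain E where E: "pcompose p ([:0, 1:] + Z) = p + pderiv p * Z + Z^2 * E"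
    by (metis add_diff_cancel_left' add_diff_eq diff_diff_eq dvd_def)
  have "pcompose (pCons a p) ([:0, 1:] + Z) - pCons a p - pderiv (pCons a p) * Z
      = ([:a:] + ([:0, 1:] + Z) * (p + pderiv p * Z + Z^2 * E)) - ([:a:] + [:0, 1:] * p)
        - (p + [:0, 1:] * pderiv p) * Z"
    by (simp add: pcompose_pCons E pderiv_pCons pCons_eq_iff)
  also have "\<dots> = Z^2 * ([:0, 1:] * E + pderiv p + Z * E)"
    by (simp add: algebra_simps power2_eq_square)
  finally show ?case by simp
qed

lemma dvd_pcompose_diff:
  fixes p :: "'a::comm_ring_1 poly"
  assumes "m dvd a - b"
  shows "m dvd pcompose p a - pcompose p b"
proof (induction p)
  case 0
  show ?case by simp
next
  case (pCons c p)
  have "pcompose (pCons c p) a - pcompose (pCons c p) b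
      = (a - b) * pcompose p a + b * (pcompose p a - pcompose p b)"
    by (simp add: pcompose_pCons algebra_simps)
  then show ?case using pCons assms by (simp add: dvd_add dvd_mult2 dvd_mult)
qed

lemma degree_pderiv_less:
  fixes p :: "'a::idom poly"
  assumes "pderiv p \<noteq> 0"
  shows "degree (pderiv p) < degree p"
proof (rule ccontr)
  assume "\<not> ?thesis"
  then have "coeff p (Suc (degree (pderiv p))) = 0" by (intro coeff_eq_0) simp
  then have "coeff (pderiv p) (degree (pderiv p)) = 0" by (simp add: coeff_pderiv)
  with assms show False by simp
qed

lemma pderiv_eq_0_if_dvd_pderiv:
  fixes p q :: "'a::idom poly"
  assumes "degree q \<le> degree p" and "p dvd pderiv q"
  shows "pderiv q = 0"
proof (rule ccontr)
  assume nz: "pderiv q \<noteq> 0"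
  with assms(2) have "degree p \<le> degree (pderiv q)" by (rule dvd_imp_degree_le)
  with assms(1) degree_pderiv_less[OF nz] show False by linarith
qed

lemma map_poly_diff_additive:
  fixes \<sigma> :: "'a::comm_ring_1 \<Rightarrow> 'b::comm_ring_1"
  assumes "\<And>x y. \<sigma> (x + y) = \<sigma> x + \<sigma> y"
  shows "map_poly \<sigma> (p - q) = map_poly \<sigma> p - map_poly \<sigma> q"
proof -
  have "\<sigma> 0 = 0" using assms[of 0 0] by simp
  moreover have "\<sigma> (x - y) = \<sigma> x - \<sigma> y" for x y
    using assms[of "x - y" y] by (simp add: algebra_simps)
  ultimately show ?thesis by (intro poly_eqI) (simp add: coeff_map_poly)
qed

lemma map_poly_mult_ring_hom:
  fixes \<sigma> :: "'a::comm_ring_1 \<Rightarrow> 'b::comm_ring_1"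
  assumes add: "\<And>x y. \<sigma> (x + y) = \<sigma> x + \<sigma> y" and mult: "\<And>x y. \<sigma> (x * y) = \<sigma> x * \<sigma> y"
  shows "map_poly \<sigma> (p * q) = map_poly \<sigma> p * map_poly \<sigma> q"
proof (induction p)
  case 0
  show ?case by simp
next
  case (pCons a p)
  have zero: "\<sigma> 0 = 0" using add[of 0 0] by simp
  have "map_poly \<sigma> (r + s) = map_poly \<sigma> r + map_poly \<sigma> s" for r s
    by (intro poly_eqI) (simp add: coeff_map_poly zero add)
  moreover have "map_poly \<sigma> (smult c r) = smult (\<sigma> c) (map_poly \<sigma> r)" for c r
    by (intro poly_eqI) (simp add: coeff_map_poly zero mult)
  ultimately show ?case by (simp add: map_poly_pCons zero pCons)
qed

lemma surj_map_poly:
  assumes "bij \<sigma>" and "\<sigma> 0 = 0"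
  shows "surj (map_poly \<sigma>)"
proof -
  have "inv \<sigma> 0 = 0" using assms by (metis bij_inv_eq_iff)
  then have "map_poly \<sigma> (map_poly (inv \<sigma>) p) = p" for p
    using assms by (simp add: map_poly_map_poly o_def bij_is_surj surj_f_inv_f)
  then show ?thesis by (metis surjI)
qed

lemma field_automorphism_0: "field_automorphism \<sigma> \<Longrightarrow> \<sigma> 0 = 0"
  unfolding field_automorphism_def by (metis add_cancel_right_right)

lemma coprime_prime_elem_right_iff:
  fixes p :: "'a::algebraic_semidom"
  assumes "prime_elem p"
  shows "coprime a p \<longleftrightarrow> \<not> p dvd a"
  using assms by (meson coprimeI coprime_absorb_right dvd_trans prime_elemD2 prime_elem_not_unit)

locale stabilizing_quot_iso =
  fixes P1 P2 :: "'a::field poly" and f :: "'a poly \<Rightarrow> 'a poly" and \<sigma> :: "'a \<Rightarrow> 'a"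
  assumes iso: "quot_ring_iso P1 P2 f" and stabilizes: "stabilizes_with P1 P2 f \<sigma>"
begin

abbreviation "Q \<equiv> Qf P1 P2 f"
abbreviation "S \<equiv> Sf P1 P2 f \<sigma>"
abbreviation "T \<equiv> map_poly \<sigma> P1"

lemma field_automorphism: "field_automorphism \<sigma>"
  using stabilizes unfolding stabilizes_with_def by blast

lemma f_add: "a \<in> residues P1 \<Longrightarrow> b \<in> residues P1 \<Longrightarrow> f (a + b) = f a + f b"
  using iso unfolding quot_ring_iso_def by blast

lemma f_mult_mod:
  "a \<in> residues P1 \<Longrightarrow> b \<in> residues P1 \<Longrightarrow> f ((a * b) mod P1) = (f a * f b) mod P2"
  using iso unfolding quot_ring_iso_def by blast

lemma f_const: "f ([:c:] mod P1) = [:\<sigma> c:] mod P2"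
  using stabilizes unfolding stabilizes_with_def by blast

lemma f_mod_eq_pcompose: "f (A mod P1) = pcompose (map_poly \<sigma> A) Q mod P2"
proof (induction A)
  case 0
  show ?case using f_const[of 0] field_automorphism_0[OF field_automorphism] by simp
next
  case (pCons a A)
  let ?X = "[:0, 1:] :: 'a poly"
  have "pCons a A mod P1 = [:a:] mod P1 + ((?X mod P1) * (A mod P1)) mod P1"
  proof -
    have "pCons a A = [:a:] + ?X * A" by (simp add: pCons_eq_iff)
    then show ?thesis by (simp only: poly_mod_add_left mod_mult_eq)
  qed
  then have "f (pCons a A mod P1)
      = [:\<sigma> a:] mod P2 + (Q * (pcompose (map_poly \<sigma> A) Q mod P2)) mod P2"
    using f_add f_mult_mod f_const pCons by (simp add: residues_def Qf_def)
  also have "\<dots> = pcompose (map_poly \<sigma> (pCons a A)) Q mod P2"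
    by (simp add: map_poly_pCons field_automorphism_0[OF field_automorphism] pcompose_pCons
        poly_mod_add_left mod_mult_right_eq)
  finally show ?case .
qed

lemma Qf_mod: "Q mod P2 = Q"
proof -
  have "[:0, 1:] mod P1 \<in> residues P1" by (simp add: residues_def)
  then have "f ([:0, 1:] mod P1) \<in> residues P2"
    using iso unfolding quot_ring_iso_def by (blast intro: bij_betw_apply)
  then show ?thesis unfolding Qf_def residues_def by simp
qed

lemma pcompose_Sf: "pcompose T Q = S * P2"
proof -
  have "pcompose T Q mod P2 = 0"
    using f_mod_eq_pcompose[of P1] f_mod_eq_pcompose[of 0] by simp
  then show ?thesis unfolding Sf_def by (metis add_0_right div_mult_mod_eq)
qed

lemma T_dvd_diff_if_pcompose_Qf_mod_eq:
  assumes "pcompose A Q mod P2 = pcompose B Q mod P2"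
  shows "T dvd A - B"
proof -
  have add: "\<And>x y. \<sigma> (x + y) = \<sigma> x + \<sigma> y" and mult: "\<And>x y. \<sigma> (x * y) = \<sigma> x * \<sigma> y"
    and "bij \<sigma>"
    using field_automorphism unfolding field_automorphism_def by blast+
  then have "surj (map_poly \<sigma>)"
    using field_automorphism_0[OF field_automorphism] by (intro surj_map_poly)
  then obtain A0 B0 where A0: "A = map_poly \<sigma> A0" and B0: "B = map_poly \<sigma> B0"
    by (metis surjD)
  have "f (A0 mod P1) = f (B0 mod P1)"
    using assms by (simp add: f_mod_eq_pcompose A0 B0)
  moreover have "inj_on f (residues P1)"
    using iso unfolding quot_ring_iso_def bij_betw_def by blast
  ultimately have "A0 mod P1 = B0 mod P1"
    by (auto simp: residues_def dest: inj_onD)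
  then obtain C where "A0 - B0 = P1 * C"
    by (metis dvdE mod_eq_dvd_iff)
  then have "A - B = T * map_poly \<sigma> C"
    by (simp add: A0 B0 map_poly_diff_additive[OF add, symmetric]
        map_poly_mult_ring_hom[OF add mult])
  then show ?thesis by simp
qed

lemma exists_pcompose_Qf_inverse:
  obtains R H where "pcompose R Q = [:0, 1:] + P2 * H"
proof -
  have "[:0, 1:] mod P2 \<in> residues P2" by (simp add: residues_def)
  then obtain R0 where "R0 \<in> residues P1" and "f R0 = [:0, 1:] mod P2"
    using iso unfolding quot_ring_iso_def by (metis bij_betw_iff_bijections)
  then have "pcompose (map_poly \<sigma> R0) Q mod P2 = [:0, 1:] mod P2"
    using f_mod_eq_pcompose[of R0] by (simp add: residues_def)
  then show ?thesis
    using that by (metis mod_eq_dvd_iff dvdE add_diff_cancel_left' add_diff_eq)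
qed

lemma T_dvd_pcompose_P2:
  assumes "pcompose R Q = [:0, 1:] + P2 * H"
  shows "T dvd pcompose P2 R"
proof -
  have "P2 dvd pcompose P2 (pcompose R Q) - pcompose P2 [:0, 1:]"
    by (rule dvd_pcompose_diff) (simp add: assms)
  then have "P2 dvd pcompose (pcompose P2 R) Q"
    by (simp add: pcompose_assoc) (metis diff_add_cancel dvd_add dvd_refl)
  then have "pcompose (pcompose P2 R) Q mod P2 = pcompose 0 Q mod P2" by simp
  then show ?thesis using T_dvd_diff_if_pcompose_Qf_mod_eq by fastforce
qed

lemma T_dvd_pcompose_Qf_minus_X:
  assumes "pcompose R Q = [:0, 1:] + P2 * H"
  shows "T dvd pcompose Q R - [:0, 1:]"
proof -
  have "P2 dvd pcompose Q (pcompose R Q) - pcompose Q [:0, 1:]"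
    by (rule dvd_pcompose_diff) (simp add: assms)
  then have "pcompose (pcompose Q R) Q mod P2 = pcompose [:0, 1:] Q mod P2"
    by (simp add: pcompose_assoc mod_eq_dvd_iff pcompose_pCons)
  then show ?thesis by (rule T_dvd_diff_if_pcompose_Qf_mod_eq)
qed

lemma dvd_pderiv_Qf_if_dvd_Sf:
  assumes "prime_elem P2" and "P2 dvd S"
  shows "P2 dvd pderiv Q"
proof -
  have "P2 \<noteq> 0" and "\<not> P2 dvd 1"
    using assms(1) by (simp_all add: prime_elem_not_unit)
  obtain R H where H: "pcompose R Q = [:0, 1:] + P2 * H"
    by (rule exists_pcompose_Qf_inverse)
  have taylor: "P2^2 dvd pcompose p (pcompose R Q) - p - pderiv p * (P2 * H)" for p
    using square_dvd_pcompose_X_plus[of "P2 * H" p] unfolding H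
    by (rule dvd_trans[rotated]) (simp add: power_mult_distrib)
  obtain W where "pcompose P2 R = T * W"
    using T_dvd_pcompose_P2[OF H] by blast
  then have "pcompose P2 (pcompose R Q) = P2 * S * pcompose W Q"
    by (simp add: pcompose_assoc pcompose_mult pcompose_Sf algebra_simps)
  then have "P2^2 dvd pcompose P2 (pcompose R Q)"
    using assms(2) by (simp add: power2_eq_square mult_dvd_mono)
  from dvd_diff[OF this taylor[of P2]] have "P2 * P2 dvd P2 * (1 + pderiv P2 * H)"
    by (simp add: power2_eq_square algebra_simps)
  then have "P2 dvd 1 + pderiv P2 * H"
    using \<open>P2 \<noteq> 0\<close> by simp
  then have "\<not> P2 dvd H"
    using \<open>\<not> P2 dvd 1\<close> by (metis dvd_add_left_iff dvd_mult)
  obtain J where J: "pcompose Q R - [:0, 1:] = T * J"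
    using T_dvd_pcompose_Qf_minus_X[OF H] by blast
  have "pcompose Q (pcompose R Q) - Q = pcompose (pcompose Q R - [:0, 1:]) Q"
    by (simp add: pcompose_assoc pcompose_diff pcompose_pCons)
  also have "\<dots> = P2 * S * pcompose J Q"
    by (simp add: J pcompose_mult pcompose_Sf algebra_simps)
  finally have "pcompose Q (pcompose R Q) - Q = P2 * S * pcompose J Q" .
  then have "P2^2 dvd pcompose Q (pcompose R Q) - Q"
    using assms(2) by (simp add: power2_eq_square mult_dvd_mono)
  from dvd_diff[OF this taylor[of Q]] have "P2 * P2 dvd P2 * (pderiv Q * H)"
    by (simp add: power2_eq_square algebra_simps)
  then have "P2 dvd pderiv Q * H"
    using \<open>P2 \<noteq> 0\<close> by simp
  with \<open>\<not> P2 dvd H\<close> show ?thesis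
    using assms(1) by (simp add: prime_elem_dvd_mult_iff)
qed

lemma dvd_Sf_if_dvd_pderiv_Qf:
  assumes "prime_elem P2" and "P2 dvd pderiv Q"
  shows "P2 dvd S"
proof -
  have "\<not> P2 dvd 1"
    using assms(1) by (rule prime_elem_not_unit)
  have "pderiv P2 \<noteq> 0"
  proof
    assume "pderiv P2 = 0"
    obtain R H where "pcompose R Q = [:0, 1:] + P2 * H"
      by (rule exists_pcompose_Qf_inverse)
    from arg_cong[OF this, of pderiv] \<open>pderiv P2 = 0\<close>
    have "pcompose (pderiv R) Q * pderiv Q = 1 + P2 * pderiv H"
      by (simp add: pderiv_pcompose pderiv_add pderiv_mult pderiv_pCons)
    with assms(2) show False
      using \<open>\<not> P2 dvd 1\<close> by (metis dvd_add_left_iff dvd_mult dvd_triv_left)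
  qed
  from arg_cong[OF pcompose_Sf, of pderiv]
  have "pcompose (pderiv T) Q * pderiv Q = S * pderiv P2 + P2 * pderiv S"
    by (simp add: pderiv_pcompose pderiv_mult algebra_simps)
  with assms(2) have "P2 dvd S * pderiv P2"
    by (metis dvd_add_left_iff dvd_mult dvd_triv_left)
  moreover have "\<not> P2 dvd pderiv P2"
    using pderiv_eq_0_if_dvd_pderiv[of P2 P2] \<open>pderiv P2 \<noteq> 0\<close> by auto
  ultimately show ?thesis
    using assms(1) by (simp add: prime_elem_dvd_mult_iff)
qed

end

theorem mainTheorem12:
  fixes P1 P2 :: "'a::field poly" and f :: "'a poly \<Rightarrow> 'a poly" and \<sigma> :: "'a \<Rightarrow> 'a"
  assumes "irreducible P1" and "irreducible P2"
    and "quot_ring_iso P1 P2 f"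
    and "stabilizes_with P1 P2 f \<sigma>"
  shows "coprime (Sf P1 P2 f \<sigma>) P2 \<longleftrightarrow> pderiv (Qf P1 P2 f) \<noteq> 0"
proof -
  interpret stabilizing_quot_iso P1 P2 f \<sigma>
    using assms(3,4) by unfold_locales
  have prime: "prime_elem P2"
    using assms(2) by (rule field_poly_irreducible_imp_prime)
  then have "coprime S P2 \<longleftrightarrow> \<not> P2 dvd S"
    by (rule coprime_prime_elem_right_iff)
  moreover have "degree Q \<le> degree P2"
    using Qf_mod degree_mod_less' prime by (metis le_less not_prime_elem_zero degree_0 zero_le)
  then have "P2 dvd pderiv Q \<longleftrightarrow> pderiv Q = 0"
    using pderiv_eq_0_if_dvd_pderiv by auto
  ultimately show ?thesis
    using prime dvd_pderiv_Qf_if_dvd_Sf dvd_Sf_if_dvd_pderiv_Qf by blast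
qed

end
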